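(* Let $\mathbb{Q}$ be the field of rational numbers with the discrete topology, and let $a_2,a_3,b_2,b_3$ be nonzero rational numbers. Let $\xi_1,\xi_2,\xi_3,\xi_4$ be independent $\mathbb{Q}$-valued random variables with nowhere-vanishing characteristic functions, and put $L_1=\xi_1+a_2\xi_2+a_3\xi_3$, $L_2=b_2\xi_2+b_3\xi_3+\xi_4$. For independent $\mathbb{Q}$-valued random variables $\eta_1,\dots,\eta_4$ with nowhere-vanishing characteristic functions put $M_1=\eta_1+a_2\eta_2+a_3\eta_3$, $M_2=b_2\eta_2+b_3\eta_3+\eta_4$. (I) If $a_2b_3\neq a_3b_2$, then for every such $\eta_1,\dots,\eta_4$ with $(M_1,M_2)$ equal in distribution to $(L_1,L_2)$, there exist $\alpha_1,\dots,\alpha_4\in\mathbb{Q}$ such that $\eta_j$ has the same distribution as $\xi_j+\alpha_j$ for $j=1,\dots,4$. (II)/(III) If $a_2b_3=a_3b_2$, $\xi_2$ and $\xi_3$ are identically distributed, and either $|a_2|\neq|a_3|$ or $a_2=a_3$, then for every such $\eta_1,\dots,\eta_4$ with $\eta_2,\eta_3$ identically distributed and $(M_1,M_2)$ equal in distribution to $(L_1,L_2)$, there exist $\alpha_1,\dots,\alpha_4\in\mathbb{Q}$ such that $\eta_j$ has the same distribution as $\xi_j+\alpha_j$ for $j=1,\dots,4$.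
   Context: The character group of the discrete additive group $\mathbb{Q}$ is the compact $\boldsymbol a$-adic solenoid $\Sigma_{\boldsymbol a}$ with $\boldsymbol a=(2,3,4,\dots)$; write $(x,y)$ for the value of the character $y\in\Sigma_{\boldsymbol a}$ at $x\in\mathbb{Q}$. The characteristic function of a $\mathbb{Q}$-valued random variable $\xi$ is $y\mapsto\mathbf{E}[(\xi,y)]$, $y\in\Sigma_{\boldsymbol a}$; "nowhere-vanishing" means it is nonzero at every $y\in\Sigma_{\boldsymbol a}$. *)

theory Defs
  imports "HOL-Probability.Probability"
begin

text \<open>Characters of the discrete group Q (= points of the a-adic solenoid
  Sigma_a): homomorphisms from (Q,+) to the unit circle.\<close>
definition rat_character :: "(rat \<Rightarrow> complex) \<Rightarrow> bool" where
  "rat_character y \<longleftrightarrow> (\<forall>x x'. y (x + x') = y x * y x') \<and> (\<forall>x. norm (y x) = 1)"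

definition char_fun_rat :: "'a measure \<Rightarrow> ('a \<Rightarrow> rat) \<Rightarrow> (rat \<Rightarrow> complex) \<Rightarrow> complex" where
  "char_fun_rat M X y = (\<integral>\<omega>. y (X \<omega>) \<partial>M)"

definition nowhere_vanishing_cf :: "'a measure \<Rightarrow> ('a \<Rightarrow> rat) \<Rightarrow> bool" where
  "nowhere_vanishing_cf M X \<longleftrightarrow> (\<forall>y. rat_character y \<longrightarrow> char_fun_rat M X y \<noteq> 0)"

definition admissible4 :: "'a measure \<Rightarrow> (nat \<Rightarrow> 'a \<Rightarrow> rat) \<Rightarrow> bool" where
  "admissible4 M X \<longleftrightarrow> prob_space M \<and>
     prob_space.indep_vars M (\<lambda>_. count_space UNIV) X {1..4} \<and>
     (\<forall>j\<in>{1..4}. nowhere_vanishing_cf M (X j))"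

end

theory Submission
  imports Defs
begin

text \<open>Restrict the characteristic functions to the characters \<open>x \<mapsto> exp (i t x)\<close>, \<open>t \<in> \<real>\<close>,
  of \<open>\<rat>\<close>.  Equality of the joint distributions makes the ratios \<open>h j = \<phi>(\<eta> j) / \<phi>(\<xi> j)\<close> satisfy
  \<open>h 1 (s) h 2 (a\<^sub>2 s + b\<^sub>2 t) h 3 (a\<^sub>3 s + b\<^sub>3 t) h 4 (t) = 1\<close>.
  If the four linear forms are pairwise independent, the finite difference method shows that every
  \<open>log (h j)\<close> is a polynomial of degree at most two.  The quadratic part vanishes because the
  characteristic function of a rational random variable is almost periodic along the periods
  \<open>2 \<pi> m!\<close>, so \<open>h j\<close> is a continuous character \<open>t \<mapsto> exp (i \<alpha> t)\<close>.
  If instead \<open>a\<^sub>2 b\<^sub>3 = a\<^sub>3 b\<^sub>2\<close> and \<open>h 3 = h 2\<close>, the equation has three factors, the middle one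
  being \<open>h 2 (u) h 2 (r u)\<close> with \<open>r = a\<^sub>3 / a\<^sub>2\<close>; first differences make it a character, and
  \<open>\<bar>r\<bar> \<noteq> 1\<close> or \<open>r = 1\<close> passes this on to \<open>h 2\<close> itself.
  Finally \<open>\<phi>(\<eta>) = exp (i \<alpha> t) \<phi>(\<xi>)\<close> gives \<open>\<eta> \<sim> \<xi> + \<alpha>\<close> by Levy's uniqueness theorem,
  and \<open>\<alpha>\<close> is rational because \<open>\<xi>\<close> has an atom.\<close>

section \<open>Finite differences along linear forms\<close>

lemma third_difference_if_periodic_factors:
  fixes F G H K :: "'v::ab_group_add \<Rightarrow> complex"
  assumes prod: "\<And>v. F v * G v * H v * K v = 1"
    and per_G: "\<And>v. G (v + a) = G v" and per_H: "\<And>v. H (v + b) = H v"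
    and per_K: "\<And>v. K (v + c) = K v"
  shows "F (a + b + c) * F a * F b * F c = F (a + b) * F (a + c) * F (b + c) * F 0"
proof -
  define P where "P v = G v * H v * K v" for v
  have FP: "F v * P v = 1" for v
    using prod[of v] unfolding P_def by (simp add: ac_simps)
  have P_nz: "P v \<noteq> 0" for v
    using FP[of v] by auto
  have "G (a + b + c) = G (b + c)" "G a = G 0" "G (a + b) = G b" "G (a + c) = G c"
    using per_G[of "b + c"] per_G[of 0] per_G[of b] per_G[of c] by (simp_all add: ac_simps)
  moreover have "H (a + b + c) = H (a + c)" "H b = H 0" "H (a + b) = H a" "H (b + c) = H c"
    using per_H[of "a + c"] per_H[of 0] per_H[of a] per_H[of c] by (simp_all add: ac_simps)
  moreover have "K (a + b + c) = K (a + b)" "K c = K 0" "K (a + c) = K a" "K (b + c) = K b"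
    using per_K[of "a + b"] per_K[of 0] per_K[of a] per_K[of b] by (simp_all add: ac_simps)
  ultimately have P_diff: "P (a + b + c) * P a * P b * P c = P (a + b) * P (a + c) * P (b + c) * P 0"
    unfolding P_def by (simp add: ac_simps)
  have "(F (a + b + c) * F a * F b * F c) * (P (a + b + c) * P a * P b * P c)
      = (F (a + b + c) * P (a + b + c)) * (F a * P a) * (F b * P b) * (F c * P c)"
    by (simp add: ac_simps)
  also have "\<dots> = (F (a + b) * P (a + b)) * (F (a + c) * P (a + c)) * (F (b + c) * P (b + c)) * (F 0 * P 0)"
    by (simp only: FP)
  also have "\<dots> = (F (a + b) * F (a + c) * F (b + c) * F 0) * (P (a + b + c) * P a * P b * P c)"
    unfolding P_diff by (simp add: ac_simps)
  finally show ?thesis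
    using P_nz by simp
qed

lemma second_difference_if_periodic_factors:
  fixes F G H :: "'v::ab_group_add \<Rightarrow> complex"
  assumes prod: "\<And>v. F v * G v * H v = 1"
    and per_G: "\<And>v. G (v + a) = G v" and per_H: "\<And>v. H (v + b) = H v"
  shows "F (a + b) * F 0 = F a * F b"
proof -
  define P where "P v = G v * H v" for v
  have FP: "F v * P v = 1" for v
    using prod[of v] unfolding P_def by (simp add: ac_simps)
  have P_nz: "P v \<noteq> 0" for v
    using FP[of v] by auto
  have "G (a + b) = G b" "G a = G 0" "H (a + b) = H a" "H b = H 0"
    using per_G[of b] per_G[of 0] per_H[of a] per_H[of 0] by (simp_all add: ac_simps)
  then have P_diff: "P (a + b) * P 0 = P a * P b"
    unfolding P_def by (simp add: ac_simps)
  have "(F (a + b) * F 0) * (P (a + b) * P 0) = (F (a + b) * P (a + b)) * (F 0 * P 0)"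
    by (simp add: ac_simps)
  also have "\<dots> = (F a * P a) * (F b * P b)"
    by (simp only: FP)
  also have "\<dots> = (F a * F b) * (P (a + b) * P 0)"
    unfolding P_diff by (simp add: ac_simps)
  finally show ?thesis
    using P_nz by simp
qed

lemma linear_forms_kernel_point:
  fixes p q p' q' :: real
  assumes det: "p * q' - p' * q \<noteq> 0"
  obtains v :: "real \<times> real" where "p * fst v + q * snd v = k" "p' * fst v + q' * snd v = 0"
proof
  define D where "D = p * q' - p' * q"
  let ?v = "(k * q' / D, - k * p' / D)"
  have "p * fst ?v + q * snd ?v = (p * (k * q') + q * (- k * p')) / D"
    by (simp add: add_divide_distrib diff_divide_distrib)
  also have "p * (k * q') + q * (- k * p') = k * D"
    unfolding D_def by (simp add: algebra_simps)
  finally show "p * fst ?v + q * snd ?v = k"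
    using det unfolding D_def by simp
  show "p' * fst ?v + q' * snd ?v = 0"
    by (simp add: field_simps)
qed

lemma third_difference_if_linear_forms:
  fixes F G H K :: "real \<Rightarrow> complex" and pF qF pG qG pH qH pK qK :: real
  assumes eq: "\<And>x y. F (pF * x + qF * y) * G (pG * x + qG * y) * H (pH * x + qH * y) * K (pK * x + qK * y) = 1"
    and "pF * qG - pG * qF \<noteq> 0" "pF * qH - pH * qF \<noteq> 0" "pF * qK - pK * qF \<noteq> 0"
  shows "F (k + l + m) * F k * F l * F m = F (k + l) * F (k + m) * F (l + m) * F 0"
proof -
  define L where "L p q v = p * fst v + q * snd v" for p q :: real and v :: "real \<times> real"
  have L_add: "L p q (v + w) = L p q v + L p q w" for p q v w
    unfolding L_def by (simp add: algebra_simps)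
  have L_0: "L p q 0 = 0" for p q
    unfolding L_def by simp
  obtain a b c where
    "L pF qF a = k" "L pG qG a = 0" "L pF qF b = l" "L pH qH b = 0" "L pF qF c = m" "L pK qK c = 0"
    using linear_forms_kernel_point assms(2-4) unfolding L_def by metis
  moreover have "F (L pF qF (a + b + c)) * F (L pF qF a) * F (L pF qF b) * F (L pF qF c)
      = F (L pF qF (a + b)) * F (L pF qF (a + c)) * F (L pF qF (b + c)) * F (L pF qF 0)"
    by (rule third_difference_if_periodic_factors[where G = "\<lambda>v. G (L pG qG v)"
          and H = "\<lambda>v. H (L pH qH v)" and K = "\<lambda>v. K (L pK qK v)"])
      (use eq in \<open>simp add: L_def\<close>, simp_all add: L_add calculation)
  ultimately show ?thesis
    by (simp add: L_add L_0)
qed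

lemma second_difference_if_linear_forms:
  fixes F G H :: "real \<Rightarrow> complex" and pF qF pG qG pH qH :: real
  assumes eq: "\<And>x y. F (pF * x + qF * y) * G (pG * x + qG * y) * H (pH * x + qH * y) = 1"
    and "pF * qG - pG * qF \<noteq> 0" "pF * qH - pH * qF \<noteq> 0"
  shows "F (k + l) * F 0 = F k * F l"
proof -
  define L where "L p q v = p * fst v + q * snd v" for p q :: real and v :: "real \<times> real"
  have L_add: "L p q (v + w) = L p q v + L p q w" for p q v w
    unfolding L_def by (simp add: algebra_simps)
  have L_0: "L p q 0 = 0" for p q
    unfolding L_def by simp
  obtain a b where "L pF qF a = k" "L pG qG a = 0" "L pF qF b = l" "L pH qH b = 0"
    using linear_forms_kernel_point assms(2-3) unfolding L_def by metis
  moreover have "F (L pF qF (a + b)) * F (L pF qF 0) = F (L pF qF a) * F (L pF qF b)"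
    by (rule second_difference_if_periodic_factors[where G = "\<lambda>v. G (L pG qG v)"
          and H = "\<lambda>v. H (L pH qH v)"])
      (use eq in \<open>simp add: L_def\<close>, simp_all add: L_add calculation)
  ultimately show ?thesis
    by (simp add: L_add L_0)
qed

section \<open>Continuous characters of the real line\<close>

lemma continuous_additive_linear:
  fixes \<phi> :: "real \<Rightarrow> complex"
  assumes cont: "continuous_on UNIV \<phi>" and add: "\<And>x y. \<phi> (x + y) = \<phi> x + \<phi> y"
  shows "\<phi> t = of_real t * \<phi> 1"
proof -
  have \<phi>_0: "\<phi> 0 = 0"
    using add[of 0 0] by simp
  have \<phi>_uminus: "\<phi> (- x) = - \<phi> x" for x
    using add[of x "- x"] \<phi>_0 by (metis add.commute eq_neg_iff_add_eq_0)
  have \<phi>_nat: "\<phi> (of_nat n * x) = of_nat n * \<phi> x" for n x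
    by (induction n) (simp_all add: \<phi>_0 add distrib_right)
  have \<phi>_int: "\<phi> (of_int n * x) = of_int n * \<phi> x" for n x
  proof (cases "n \<ge> 0")
    case True
    then show ?thesis
      using \<phi>_nat[of "nat n" x] by simp
  next
    case False
    then have "of_int n * x = - (of_nat (nat (- n)) * x)"
      by simp
    then show ?thesis
      using False \<phi>_uminus \<phi>_nat[of "nat (- n)" x] by simp
  qed
  define \<psi> where "\<psi> t = \<phi> t - of_real t * \<phi> 1" for t
  have "\<psi> r = 0" if "r \<in> \<rat>" for r
  proof -
    obtain a b where ab: "b > 0" "r = of_int a / of_int b"
      using Rats_cases'[OF \<open>r \<in> \<rat>\<close>] by metis
    have "of_int b * \<phi> r = \<phi> (of_int b * r)"
      by (simp add: \<phi>_int)
    also have "of_int b * r = of_int a * 1"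
      using ab by simp
    finally have "of_int b * \<phi> r = of_int a * \<phi> 1"
      by (simp only: \<phi>_int)
    then show ?thesis
      unfolding \<psi>_def ab(2) using ab(1) by (simp add: field_simps)
  qed
  moreover have "continuous_on (closure \<rat>) \<psi>"
    unfolding \<psi>_def by (intro continuous_intros continuous_on_subset[OF cont]) auto
  ultimately have "\<psi> t = 0"
    using continuous_constant_on_closure[of \<rat> \<psi> 0 t] Rats_closure_real by auto
  then show ?thesis
    unfolding \<psi>_def by simp
qed

lemma continuous_exp_eq_1_constant:
  fixes D :: "'a::topological_space \<Rightarrow> complex"
  assumes "connected S" "continuous_on S D" and exp_D: "\<And>x. x \<in> S \<Longrightarrow> exp (D x) = 1"
  shows "D constant_on S"
proof (rule continuous_discrete_range_constant[OF assms(1,2)])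
  fix x assume "x \<in> S"
  have "2 * pi \<le> norm (D y - D x)" if "y \<in> S" "D y \<noteq> D x" for y
  proof -
    obtain n :: int where n: "D y = D x + of_int (2 * n) * pi * \<i>"
      using exp_D[OF \<open>y \<in> S\<close>] exp_D[OF \<open>x \<in> S\<close>] exp_eq by metis
    with \<open>D y \<noteq> D x\<close> have "n \<noteq> 0"
      by auto
    then have "2 * pi * 1 \<le> 2 * pi * \<bar>real_of_int n\<bar>"
      by (intro mult_left_mono) auto
    also have "\<dots> = norm (D y - D x)"
      by (simp add: n norm_mult abs_mult)
    finally show ?thesis
      by simp
  qed
  then show "\<exists>e>0. \<forall>y. y \<in> S \<and> D y \<noteq> D x \<longrightarrow> e \<le> norm (D y - D x)"
    by (intro exI[of _ "2 * pi"]) auto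
qed

lemma continuous_mult_hom_exp:
  fixes h :: "real \<Rightarrow> complex"
  assumes cont: "continuous_on UNIV h" and hom: "\<And>x y. h (x + y) = h x * h y" and "h 0 \<noteq> 0"
  obtains c where "\<And>t. h t = exp (c * of_real t)"
proof -
  have h_0: "h 0 = 1"
    using hom[of 0 0] \<open>h 0 \<noteq> 0\<close> by simp
  have h_nz: "h x \<noteq> 0" for x
    using hom[of x "- x"] h_0 by auto
  obtain g where g_cont: "continuous_on UNIV g" and "\<And>x. x \<in> UNIV \<Longrightarrow> h x = exp (g x)"
    by (rule continuous_logarithm_on_contractible[OF cont convex_imp_contractible[OF convex_UNIV] h_nz]) blast
  then have h_g: "h x = exp (g x)" for x
    by simp
  define D where "D p = g (fst p + snd p) - g (fst p) - g (snd p)" for p :: "real \<times> real"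
  have "D constant_on UNIV"
  proof (rule continuous_exp_eq_1_constant[OF connected_UNIV])
    show "continuous_on UNIV D"
      unfolding D_def by (intro continuous_intros continuous_on_compose2[OF g_cont]) auto
    show "exp (D p) = 1" for p
      using hom[of "fst p" "snd p"] h_nz unfolding D_def by (simp add: exp_diff h_g[symmetric])
  qed
  then have "D (x, y) = D (0, 0)" for x y
    unfolding constant_on_def by auto
  then have add: "g (x + y) - g 0 = (g x - g 0) + (g y - g 0)" for x y
    unfolding D_def by (simp add: algebra_simps)
  have "continuous_on UNIV (\<lambda>t. g t - g 0)"
    by (intro continuous_intros g_cont)
  from continuous_additive_linear[OF this add]
  have lin: "g t - g 0 = of_real t * (g 1 - g 0)" for t .
  have "h t = exp ((g 1 - g 0) * of_real t)" for t
  proof -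
    have "h t = exp (g 0) * exp (g t - g 0)"
      by (simp add: h_g flip: exp_add)
    also have "exp (g 0) = 1"
      using h_0 h_g[of 0] by simp
    finally show ?thesis
      by (simp add: lin[of t] mult.commute)
  qed
  then show ?thesis
    by (rule that)
qed

lemma continuous_mult_hom_unimodular:
  fixes h :: "real \<Rightarrow> complex" and s :: "nat \<Rightarrow> real"
  assumes "continuous_on UNIV h" "\<And>x y. h (x + y) = h x * h y" "h 0 \<noteq> 0"
    and lim: "(\<lambda>n. h (s n)) \<longlonglongrightarrow> 1" and s: "filterlim s at_top sequentially"
  obtains \<alpha> :: real where "\<And>t. h t = iexp (\<alpha> * t)"
proof -
  obtain c where h_exp: "\<And>t. h t = exp (c * of_real t)"
    using continuous_mult_hom_exp[OF assms(1-3)] by blast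
  have "(\<lambda>n. norm (h (s n))) \<longlonglongrightarrow> 1"
    using tendsto_norm[OF lim] by simp
  then have "(\<lambda>n. ln (exp (Re c * s n))) \<longlonglongrightarrow> ln 1"
    unfolding h_exp by (intro tendsto_ln) auto
  then have "(\<lambda>n. Re c * s n) \<longlonglongrightarrow> 0"
    by simp
  moreover have "(\<lambda>n. inverse (s n)) \<longlonglongrightarrow> 0"
    using s by (rule tendsto_inverse_0_at_top)
  ultimately have "(\<lambda>n. (Re c * s n) * inverse (s n)) \<longlonglongrightarrow> 0 * 0"
    by (rule tendsto_mult)
  moreover have "\<forall>\<^sub>F n in sequentially. 0 < s n"
    using s unfolding filterlim_at_top_dense by blast
  then have "\<forall>\<^sub>F n in sequentially. (Re c * s n) * inverse (s n) = Re c"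
    by (rule eventually_mono) simp
  ultimately have "(\<lambda>n. Re c) \<longlonglongrightarrow> 0 * 0"
    by (rule Lim_transform_eventually)
  then have "Re c = 0"
    by (simp add: LIMSEQ_const_iff)
  then have c_eq: "c = \<i> * of_real (Im c)"
    by (simp add: complex_eq_iff)
  have "h t = iexp (Im c * t)" for t
    unfolding h_exp by (subst c_eq) (simp add: mult.assoc)
  then show ?thesis
    by (rule that)
qed

lemma const_if_contraction_invariant:
  fixes \<phi> :: "real \<Rightarrow> complex"
  assumes cont: "continuous_on UNIV \<phi>" and "\<bar>\<rho>\<bar> < 1" and inv: "\<And>t. \<phi> (\<rho> * t) = \<phi> t"
  shows "\<phi> t = \<phi> 0"
proof -
  have iter: "\<phi> (\<rho> ^ n * t) = \<phi> t" for n
    by (induction n) (simp_all add: mult.assoc inv)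
  have "(\<lambda>n. \<rho> ^ n * t) \<longlonglongrightarrow> 0 * t"
    by (intro tendsto_intros) (use \<open>\<bar>\<rho>\<bar> < 1\<close> in simp)
  then have "(\<lambda>n. \<phi> (\<rho> ^ n * t)) \<longlonglongrightarrow> \<phi> 0"
    using continuous_on_tendsto_compose[OF cont] by auto
  then show ?thesis
    unfolding iter by (simp add: LIMSEQ_const_iff)
qed

text \<open>For \<open>r = -1\<close> the conclusion fails: \<open>exp (i t) exp (- i t) = 1\<close>.\<close>

lemma dilation_reciprocal_eq_1:
  fixes \<phi> :: "real \<Rightarrow> complex"
  assumes cont: "continuous_on UNIV \<phi>" and "\<phi> 0 = 1" and recip: "\<And>t. \<phi> t * \<phi> (r * t) = 1"
    and r: "\<bar>r\<bar> \<noteq> 1 \<or> r = 1"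
  shows "\<phi> t = 1"
proof (cases "r = 1")
  case True
  then have "\<phi> ` UNIV \<subseteq> {1, -1}"
    using recip by (auto simp: power2_eq_1_iff simp flip: power2_eq_square)
  then have "\<phi> constant_on UNIV"
    by (intro continuous_finite_range_constant[OF connected_UNIV cont]) (simp add: finite_subset)
  then show ?thesis
    using \<open>\<phi> 0 = 1\<close> unfolding constant_on_def by (metis UNIV_I)
next
  case False
  with r have "\<bar>r\<bar> \<noteq> 1"
    by auto
  have square: "\<phi> (r * r * t) = \<phi> t" for t
  proof -
    have "\<phi> (r * t) * \<phi> t = \<phi> (r * t) * \<phi> (r * (r * t))"
      using recip[of t] recip[of "r * t"] by (simp add: mult.commute)
    moreover have "\<phi> (r * t) \<noteq> 0"
      using recip[of t] by auto
    ultimately show ?thesis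
      by (simp add: mult.assoc)
  qed
  show ?thesis
  proof (cases "\<bar>r\<bar> < 1")
    case True
    then have "\<bar>r\<bar> * \<bar>r\<bar> < 1 * 1"
      by (intro mult_strict_mono') auto
    then have "\<bar>r * r\<bar> < 1"
      by (simp add: abs_mult)
    have "\<phi> t = \<phi> 0"
      by (rule const_if_contraction_invariant[OF cont \<open>\<bar>r * r\<bar> < 1\<close>]) (simp add: square)
    then show ?thesis
      using \<open>\<phi> 0 = 1\<close> by simp
  next
    case False
    with \<open>\<bar>r\<bar> \<noteq> 1\<close> have "1 * 1 < \<bar>r\<bar> * \<bar>r\<bar>"
      by (intro mult_strict_mono) auto
    then have "1 < \<bar>r * r\<bar>"
      by (simp add: abs_mult)
    then have "\<bar>inverse (r * r)\<bar> < 1"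
      unfolding abs_inverse inverse_less_1_iff by blast
    moreover have "\<phi> (inverse (r * r) * t) = \<phi> t" for t
    proof -
      have "r * r \<noteq> 0"
        using \<open>1 < \<bar>r * r\<bar>\<close> by auto
      then have "r * r * (inverse (r * r) * t) = t"
        unfolding mult.assoc[symmetric] right_inverse[OF \<open>r * r \<noteq> 0\<close>] by simp
      then show ?thesis
        using square[of "inverse (r * r) * t"] by metis
    qed
    ultimately show ?thesis
      using const_if_contraction_invariant[OF cont] \<open>\<phi> 0 = 1\<close> by metis
  qed
qed

lemma mult_hom_if_dilation_product_hom:
  fixes h :: "real \<Rightarrow> complex"
  assumes cont: "continuous_on UNIV h" and "h 0 = 1"
    and hom: "\<And>k l. h (k + l) * h (r * (k + l)) = (h k * h (r * k)) * (h l * h (r * l))"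
    and r: "\<bar>r\<bar> \<noteq> 1 \<or> r = 1"
  shows "h (k + l) = h k * h l"
proof -
  have "continuous_on UNIV (\<lambda>t. h t * h (r * t))"
    by (intro continuous_intros cont continuous_on_compose2[OF cont]) auto
  then obtain c where c: "\<And>t. h t * h (r * t) = exp (c * of_real t)"
    by (rule continuous_mult_hom_exp[of "\<lambda>t. h t * h (r * t)"]) (use hom \<open>h 0 = 1\<close> in auto)
  have "1 + r \<noteq> 0"
    using r by auto
  then have "complex_of_real (1 + r) \<noteq> 0"
    by (metis of_real_eq_0_iff)
  define d where "d = c / of_real (1 + r)"
  define \<phi> where "\<phi> t = h t / exp (d * of_real t)" for t
  have \<phi>_recip: "\<phi> t * \<phi> (r * t) = 1" for t
  proof -
    have "d * of_real t + d * of_real (r * t) = d * of_real (1 + r) * of_real t"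
      by (simp add: algebra_simps)
    also have "\<dots> = c * of_real t"
      unfolding d_def using \<open>complex_of_real (1 + r) \<noteq> 0\<close> by simp
    finally have "exp (d * of_real t) * exp (d * of_real (r * t)) = h t * h (r * t)"
      unfolding c exp_add[symmetric] by (rule arg_cong)
    moreover have "\<phi> t * \<phi> (r * t) = (h t * h (r * t)) / (exp (d * of_real t) * exp (d * of_real (r * t)))"
      unfolding \<phi>_def by simp
    moreover have "exp (d * of_real t) * exp (d * of_real (r * t)) \<noteq> 0"
      by simp
    ultimately show ?thesis
      by (metis divide_self)
  qed
  have \<phi>_cont: "continuous_on UNIV \<phi>"
    unfolding \<phi>_def by (intro continuous_intros cont) auto
  have "\<phi> 0 = 1"
    unfolding \<phi>_def using \<open>h 0 = 1\<close> by simp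
  from dilation_reciprocal_eq_1[OF \<phi>_cont this \<phi>_recip r]
  have "\<phi> t = 1" for t .
  then have "h t = exp (d * of_real t)" for t
    unfolding \<phi>_def by (simp add: divide_eq_1_iff)
  then show ?thesis
    by (simp add: distrib_left exp_add)
qed

locale bimultiplicative =
  fixes B :: "real \<Rightarrow> real \<Rightarrow> complex"
  assumes mult_right: "B k (l + m) = B k l * B k m"
    and commute: "B k l = B l k"
    and nonzero: "B k l \<noteq> 0"
begin

lemma zero_right: "B k 0 = 1"
  using mult_right[of k 0 0] nonzero[of k 0] by simp

lemma power_right: "B k (of_nat n * l) = B k l ^ n"
proof (induction n)
  case (Suc n)
  have "B k (of_nat (Suc n) * l) = B k (l + of_nat n * l)"
    by (simp add: algebra_simps)
  then show ?case
    by (simp only: mult_right Suc power_Suc)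
qed (simp add: zero_right)

lemma power_left: "B (of_nat n * k) l = B k l ^ n"
  using power_right commute by metis

lemma uminus_right: "B k (- l) = inverse (B k l)"
  using mult_right[of k l "- l"] nonzero[of k l] by (simp add: zero_right field_simps)

lemma int_multiple_right: "B k (of_int a * l) = 1" if "B k l = 1"
proof (cases "a \<ge> 0")
  case True
  then show ?thesis
    using power_right[of k "nat a" l] that by simp
next
  case False
  then have "of_int a * l = - (of_nat (nat (- a)) * l)"
    by simp
  then show ?thesis
    using uminus_right power_right[of k "nat (- a)" l] that by simp
qed

lemma eq_1_if_period:
  assumes cont: "\<And>k. continuous_on UNIV (B k)" and period: "\<And>k. B k (2 * pi) = 1"
  shows "B k l = 1"
proof -
  have "B k (2 * pi * r) = 1" if "r \<in> \<rat>" for r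
  proof -
    obtain a b where ab: "b > 0" "r = of_int a / of_int b"
      using Rats_cases'[OF \<open>r \<in> \<rat>\<close>] by metis
    then have b: "(of_nat (nat b) :: real) = of_int b"
      by simp
    have "B k (2 * pi * r) = B (of_nat (nat b) * (k / of_int b)) (2 * pi * r)"
      using ab(1) b by simp
    also have "\<dots> = B (k / of_int b) (of_nat (nat b) * (2 * pi * r))"
      unfolding power_left power_right ..
    also have "of_nat (nat b) * (2 * pi * r) = of_int a * (2 * pi)"
      unfolding b ab(2) using ab(1) by simp
    also have "B (k / of_int b) \<dots> = 1"
      by (rule int_multiple_right[OF period])
    finally show ?thesis .
  qed
  moreover have "continuous_on UNIV (\<lambda>r. B k (2 * pi * r))"
    by (intro continuous_on_compose2[OF cont] continuous_intros) auto
  ultimately have "B k (2 * pi * (l / (2 * pi))) = 1"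
    using continuous_constant_on_closure[of \<rat> "\<lambda>r. B k (2 * pi * r)"] Rats_closure_real
    by (metis UNIV_I closure_UNIV continuous_on_subset subset_UNIV)
  then show ?thesis
    by simp
qed

lemma period_if_uniform_limit:
  assumes unif: "uniform_limit {0..1} (\<lambda>m k. B k (2 * pi * fact m)) (\<lambda>_. 1) sequentially"
  shows "B u (2 * pi) = 1"
proof -
  have nonneg: "B u (2 * pi) = 1" if "u \<ge> 0" for u
  proof (rule ccontr)
    assume "B u (2 * pi) \<noteq> 1"
    then have "dist (B u (2 * pi)) 1 > 0"
      by simp
    from uniform_limitD[OF unif this] obtain m0 where
      m0: "\<And>m k. m \<ge> m0 \<Longrightarrow> k \<in> {0..1} \<Longrightarrow> dist (B k (2 * pi * fact m)) 1 < dist (B u (2 * pi)) 1"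
      unfolding eventually_sequentially by blast
    define m where "m = max m0 (nat \<lceil>u\<rceil>)"
    have "u \<le> real m"
      unfolding m_def by linarith
    also have "real m \<le> fact m"
      by (metis fact_ge_self of_nat_fact of_nat_le_iff)
    finally have "u / fact m \<in> {0..1}"
      using \<open>u \<ge> 0\<close> by simp
    moreover have "B (u / fact m) (2 * pi * fact m) = B u (2 * pi)"
      using power_left[of "fact m" "u / fact m"] power_right[of "u / fact m" "fact m" "2 * pi"]
      by (simp add: mult_ac)
    ultimately show False
      using m0[of m "u / fact m"] unfolding m_def by simp
  qed
  show ?thesis
  proof (cases "u \<ge> 0")
    case False
    have "B u (2 * pi) = inverse (B (2 * pi) (- u))"
      using uminus_right[of "2 * pi" "- u"] commute by simp
    also have "B (2 * pi) (- u) = 1"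
      using nonneg[of "- u"] False commute by simp
    finally show ?thesis
      by simp
  qed (rule nonneg)
qed

end

lemma mult_hom_if_third_difference:
  fixes h :: "real \<Rightarrow> complex"
  assumes cont: "continuous_on UNIV h" and nz: "\<And>x. h x \<noteq> 0" and "h 0 = 1"
    and third: "\<And>k l m. h (k + l + m) * h k * h l * h m = h (k + l) * h (k + m) * h (l + m) * h 0"
    and unif: "uniform_limit {0..1} (\<lambda>m k. h (k + 2 * pi * fact m) / (h k * h (2 * pi * fact m))) (\<lambda>_. 1) sequentially"
  shows "h (k + l) = h k * h l"
proof -
  define B where "B k l = h (k + l) / (h k * h l)" for k l
  \<comment> \<open>the third-difference identity says exactly that the defect \<open>B\<close> is bimultiplicative\<close>
  interpret bimultiplicative B
  proof
    show "B k (l + m) = B k l * B k m" for k l m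
      using third[of k l m] nz \<open>h 0 = 1\<close> unfolding B_def by (simp add: field_simps add.assoc)
    show "B k l = B l k" for k l
      unfolding B_def by (simp add: add.commute mult.commute)
    show "B k l \<noteq> 0" for k l
      unfolding B_def using nz by simp
  qed
  have "B k l = 1"
  proof (rule eq_1_if_period)
    show "continuous_on UNIV (B k)" for k
      unfolding B_def by (intro continuous_intros continuous_on_compose2[OF cont]) (auto simp: nz)
    show "B u (2 * pi) = 1" for u
      by (rule period_if_uniform_limit) (use unif in \<open>simp add: B_def\<close>)
  qed
  then show ?thesis
    unfolding B_def using nz by (simp add: field_simps)
qed

section \<open>Characteristic functions of rational random variables\<close>

definition real_char :: "'a measure \<Rightarrow> ('a \<Rightarrow> rat) \<Rightarrow> real \<Rightarrow> complex" where
  "real_char M X t = (\<integral>\<omega>. iexp (t * real_of_rat (X \<omega>)) \<partial>M)"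

definition real_char_ratio :: "'b measure \<Rightarrow> ('b \<Rightarrow> rat) \<Rightarrow> 'a measure \<Rightarrow> ('a \<Rightarrow> rat) \<Rightarrow> real \<Rightarrow> complex" where
  "real_char_ratio N Y M X t = real_char N Y t / real_char M X t"

lemma borel_measurable_count_space_comp:
  assumes "X \<in> measurable M (count_space UNIV)"
  shows "(\<lambda>\<omega>. f (X \<omega>) :: 'b::topological_space) \<in> borel_measurable M"
  by (rule measurable_compose[OF assms]) simp

lemma (in prob_space) integrable_bounded_count_space_comp:
  fixes f :: "'b \<Rightarrow> 'c::{banach, second_countable_topology}"
  assumes "X \<in> measurable M (count_space UNIV)" "\<And>q. norm (f q) \<le> B"
  shows "integrable M (\<lambda>\<omega>. f (X \<omega>))"
  by (rule integrable_const_bound[where B = B]) (use assms borel_measurable_count_space_comp in auto)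

lemma real_char_eq_char:
  assumes "X \<in> measurable M (count_space UNIV)"
  shows "real_char M X = char (distr M borel (\<lambda>\<omega>. real_of_rat (X \<omega>)))"
  unfolding real_char_def char_def fun_eq_iff
  by (subst integral_distr) (auto intro: borel_measurable_count_space_comp[OF assms])

lemma real_distribution_real_of_rat:
  assumes "prob_space M" "X \<in> measurable M (count_space UNIV)"
  shows "real_distribution (distr M borel (\<lambda>\<omega>. real_of_rat (X \<omega>)))"
  using prob_space.real_distribution_distr[OF assms(1) borel_measurable_count_space_comp[OF assms(2)]] .

lemma isCont_real_char:
  assumes "prob_space M" "X \<in> measurable M (count_space UNIV)"
  shows "isCont (real_char M X) t"
  unfolding real_char_eq_char[OF assms(2)] by (rule real_distribution.isCont_char[OF real_distribution_real_of_rat[OF assms]])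

lemma norm_real_char_le_1:
  assumes "prob_space M" "X \<in> measurable M (count_space UNIV)"
  shows "norm (real_char M X t) \<le> 1"
  unfolding real_char_eq_char[OF assms(2)] by (rule real_distribution.cmod_char_le_1[OF real_distribution_real_of_rat[OF assms]])

lemma real_char_zero:
  assumes "prob_space M"
  shows "real_char M X 0 = 1"
  using assms unfolding real_char_def by (simp add: prob_space.prob_space)

lemma real_char_nonzero:
  assumes "nowhere_vanishing_cf M X"
  shows "real_char M X t \<noteq> 0"
proof -
  have "rat_character (\<lambda>x. iexp (t * real_of_rat x))"
    unfolding rat_character_def by (simp add: of_rat_add distrib_left flip: exp_add)
  then show ?thesis
    using assms unfolding nowhere_vanishing_cf_def char_fun_rat_def real_char_def by blast
qed

lemma real_char_eq_if_distr_eq: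
  assumes "X \<in> measurable M (count_space UNIV)" "X' \<in> measurable M' (count_space UNIV)"
    and "distr M (count_space UNIV) X = distr M' (count_space UNIV) X'"
  shows "real_char M X = real_char M' X'"
proof
  fix t
  have "real_char M X t = (\<integral>x. iexp (t * real_of_rat x) \<partial>distr M (count_space UNIV) X)"
    unfolding real_char_def by (subst integral_distr[OF assms(1)]) auto
  also have "\<dots> = real_char M' X' t"
    unfolding real_char_def assms(3) by (subst integral_distr[OF assms(2)]) auto
  finally show "real_char M X t = real_char M' X' t" .
qed

lemma continuous_real_char_ratio:
  assumes "prob_space M" "prob_space N"
    and "X \<in> measurable M (count_space UNIV)" "Y \<in> measurable N (count_space UNIV)"
    and "\<And>t. real_char M X t \<noteq> 0"
  shows "continuous_on UNIV (real_char_ratio N Y M X)"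
  unfolding real_char_ratio_def[abs_def]
  by (intro continuous_at_imp_continuous_on ballI isCont_divide isCont_real_char assms)

text \<open>Every rational is annihilated by \<open>2 \<pi> m!\<close> for large \<open>m\<close>, so the real characteristic
  function of a rational random variable is almost periodic along these periods.\<close>

lemma iexp_two_pi_int: "x \<in> \<int> \<Longrightarrow> iexp (2 * pi * x) = 1"
  by (elim Ints_cases) (use exp_integer_2pi[of "of_int _"] in \<open>simp add: mult_ac\<close>)

lemma iexp_fact_period_eventually_1:
  fixes q :: rat
  shows "\<forall>\<^sub>F m in sequentially. iexp (2 * pi * fact m * real_of_rat q) = 1"
proof -
  obtain a b where ab: "b > 0" "real_of_rat q = of_int a / of_int b"
    using Rats_cases'[OF Rats_of_rat] by metis
  have "iexp (2 * pi * (fact m * real_of_rat q)) = 1" if "m \<ge> nat b" for m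
  proof (rule iexp_two_pi_int)
    have "nat b dvd fact m"
      using that ab(1) by (intro dvd_fact) auto
    then obtain k where k: "fact m = nat b * k"
      by (auto elim: dvdE)
    have "(fact m :: real) = of_nat (nat b * k)"
      unfolding k[symmetric] by simp
    also have "\<dots> = real k * of_int b"
      using ab(1) by simp
    finally have "(fact m :: real) * real_of_rat q = of_int (int k * a)"
      using ab by simp
    then show "fact m * real_of_rat q \<in> \<int>"
      by simp
  qed
  then show ?thesis
    unfolding eventually_sequentially by (auto simp: mult.assoc)
qed

lemma (in prob_space) tendsto_integral_iexp_fact_period:
  assumes "X \<in> measurable M (count_space UNIV)"
  shows "(\<lambda>m. \<integral>\<omega>. norm (iexp (2 * pi * fact m * real_of_rat (X \<omega>)) - 1) \<partial>M) \<longlonglongrightarrow> 0"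
proof -
  have "(\<lambda>m. \<integral>\<omega>. norm (iexp (2 * pi * fact m * real_of_rat (X \<omega>)) - 1) \<partial>M) \<longlonglongrightarrow> (\<integral>\<omega>. 0 \<partial>M)"
  proof (rule integral_dominated_convergence[where w = "\<lambda>_. 2"])
    show "AE \<omega> in M. (\<lambda>m. norm (iexp (2 * pi * fact m * real_of_rat (X \<omega>)) - 1)) \<longlonglongrightarrow> 0"
      by (intro AE_I2 tendsto_eventually eventually_mono[OF iexp_fact_period_eventually_1]) simp
    show "AE \<omega> in M. norm (norm (iexp (2 * pi * fact m * real_of_rat (X \<omega>)) - 1)) \<le> 2" for m
      using norm_triangle_ineq4[of "iexp (2 * pi * fact m * real_of_rat (X _))" 1] by (intro AE_I2) simp
  qed (auto intro: borel_measurable_count_space_comp[OF assms])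
  then show ?thesis
    by simp
qed

lemma (in prob_space) norm_real_char_shift_le:
  assumes X: "X \<in> measurable M (count_space UNIV)"
  shows "norm (real_char M X (t + s) - real_char M X t) \<le> (\<integral>\<omega>. norm (iexp (s * real_of_rat (X \<omega>)) - 1) \<partial>M)"
proof -
  have "real_char M X (t + s) - real_char M X t
      = (\<integral>\<omega>. iexp ((t + s) * real_of_rat (X \<omega>)) - iexp (t * real_of_rat (X \<omega>)) \<partial>M)"
    unfolding real_char_def
    by (intro Bochner_Integration.integral_diff[symmetric] integrable_bounded_count_space_comp[OF X, where B = 1]) simp_all
  also have "norm \<dots> \<le> (\<integral>\<omega>. norm (iexp ((t + s) * real_of_rat (X \<omega>)) - iexp (t * real_of_rat (X \<omega>))) \<partial>M)"
    by (rule integral_norm_bound)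
  also have "\<dots> = (\<integral>\<omega>. norm (iexp (s * real_of_rat (X \<omega>)) - 1) \<partial>M)"
  proof (rule Bochner_Integration.integral_cong[OF refl])
    fix \<omega>
    have "iexp ((t + s) * real_of_rat (X \<omega>)) - iexp (t * real_of_rat (X \<omega>))
        = iexp (t * real_of_rat (X \<omega>)) * (iexp (s * real_of_rat (X \<omega>)) - 1)"
      by (simp add: algebra_simps flip: exp_add)
    then show "norm (iexp ((t + s) * real_of_rat (X \<omega>)) - iexp (t * real_of_rat (X \<omega>)))
        = norm (iexp (s * real_of_rat (X \<omega>)) - 1)"
      by (simp add: norm_mult)
  qed
  finally show ?thesis .
qed

lemma (in prob_space) real_char_fact_period_tendsto:
  assumes "X \<in> measurable M (count_space UNIV)"
  shows "(\<lambda>m. real_char M X (2 * pi * fact m)) \<longlonglongrightarrow> 1"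
proof -
  have "(\<lambda>m. real_char M X (2 * pi * fact m) - 1) \<longlonglongrightarrow> 0"
  proof (rule Lim_null_comparison[OF _ tendsto_integral_iexp_fact_period[OF assms]])
    have "norm (real_char M X (2 * pi * fact m) - 1)
        \<le> (\<integral>\<omega>. norm (iexp (2 * pi * fact m * real_of_rat (X \<omega>)) - 1) \<partial>M)" for m
      using norm_real_char_shift_le[OF assms, of 0 "2 * pi * fact m"]
      unfolding add_0_left real_char_zero[OF prob_space_axioms] .
    then show "\<forall>\<^sub>F m in sequentially. norm (real_char M X (2 * pi * fact m) - 1)
        \<le> (\<integral>\<omega>. norm (iexp (2 * pi * fact m * real_of_rat (X \<omega>)) - 1) \<partial>M)"
      by (intro always_eventually allI)
  qed
  then show ?thesis
    by (simp add: LIM_zero_iff)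
qed

lemma quotient_defect_estimate:
  fixes f0 f1 fs g0 g1 gs :: complex
  assumes le_1: "norm f0 \<le> 1" "norm fs \<le> 1" "norm g0 \<le> 1" "norm gs \<le> 1"
    and lower: "\<mu> \<le> norm (g0 * f0)"
    and close: "norm (g1 - g0) \<le> \<delta>" "norm (f1 - f0) \<le> \<delta>" "norm (fs - 1) \<le> \<delta>" "norm (gs - 1) \<le> \<delta>"
    and small: "4 * \<delta> < \<mu>"
  shows "norm ((g1 / f1) / ((g0 / f0) * (gs / fs)) - 1) \<le> 8 * \<delta> / \<mu>"
proof -
  define P where "P = g0 * f0"
  define Nm where "Nm = g1 * f0 * fs"
  define Dm where "Dm = f1 * g0 * gs"
  have "0 \<le> \<delta>"
    using close(1) norm_ge_zero order_trans by blast
  have P_le_1: "norm P \<le> 1"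
    unfolding P_def using le_1 by (simp add: norm_mult mult_le_one)
  have norm_f0_fs: "norm (f0 * fs) \<le> 1" and norm_g0_gs: "norm (g0 * gs) \<le> 1"
    using le_1 by (simp_all add: norm_mult mult_le_one)
  have "Nm - P = (g1 - g0) * (f0 * fs) + P * (fs - 1)"
    unfolding Nm_def P_def by (simp add: algebra_simps)
  then have "norm (Nm - P) \<le> norm (g1 - g0) * norm (f0 * fs) + norm P * norm (fs - 1)"
    by (metis norm_mult norm_triangle_ineq)
  also have "\<dots> \<le> \<delta> * 1 + 1 * \<delta>"
    using close norm_f0_fs P_le_1 \<open>0 \<le> \<delta>\<close> by (intro add_mono mult_mono) auto
  finally have Nm_P: "norm (Nm - P) \<le> 2 * \<delta>"
    by simp
  have "Dm - P = (f1 - f0) * (g0 * gs) + P * (gs - 1)"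
    unfolding Dm_def P_def by (simp add: algebra_simps)
  then have "norm (Dm - P) \<le> norm (f1 - f0) * norm (g0 * gs) + norm P * norm (gs - 1)"
    by (metis norm_mult norm_triangle_ineq)
  also have "\<dots> \<le> \<delta> * 1 + 1 * \<delta>"
    using close norm_g0_gs P_le_1 \<open>0 \<le> \<delta>\<close> by (intro add_mono mult_mono) auto
  finally have Dm_P: "norm (Dm - P) \<le> 2 * \<delta>"
    by simp
  have "norm (Nm - Dm) \<le> norm (Nm - P) + norm (Dm - P)"
    using norm_triangle_ineq4[of "Nm - P" "Dm - P"] by simp
  with Nm_P Dm_P have Nm_Dm: "norm (Nm - Dm) \<le> 4 * \<delta>"
    by simp
  have "norm P \<le> norm Dm + norm (Dm - P)"
    by (metis norm_minus_commute norm_triangle_sub)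
  with Dm_P lower small have Dm_ge: "\<mu> / 2 < norm Dm"
    unfolding P_def by simp
  have "\<mu> > 0" "\<mu> \<le> 1"
    using small \<open>0 \<le> \<delta>\<close> lower P_le_1 unfolding P_def by auto
  then have "fs \<noteq> 0" "f0 \<noteq> 0"
    using close(3) small lower by auto
  moreover have "Dm \<noteq> 0"
    using Dm_ge \<open>\<mu> > 0\<close> by auto
  ultimately have "(g1 / f1) / ((g0 / f0) * (gs / fs)) - 1 = (Nm - Dm) / Dm"
    unfolding Nm_def Dm_def by (simp add: field_simps)
  then have "norm ((g1 / f1) / ((g0 / f0) * (gs / fs)) - 1) = norm (Nm - Dm) / norm Dm"
    by (simp add: norm_divide)
  also have "\<dots> \<le> (4 * \<delta>) / (\<mu> / 2)"
    using Nm_Dm Dm_ge \<open>\<mu> > 0\<close> \<open>0 \<le> \<delta>\<close> by (intro frac_le) auto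
  finally show ?thesis
    by simp
qed

lemma real_char_product_bounded_below:
  assumes "prob_space M" "prob_space N"
    and "X \<in> measurable M (count_space UNIV)" "Y \<in> measurable N (count_space UNIV)"
    and nz: "\<And>t. real_char M X t \<noteq> 0" "\<And>t. real_char N Y t \<noteq> 0"
  obtains \<mu> where "\<mu> > 0" "\<And>k. k \<in> {0..1} \<Longrightarrow> \<mu> \<le> norm (real_char N Y k * real_char M X k)"
proof -
  have cont: "continuous_on {0..1} (\<lambda>k. norm (real_char N Y k * real_char M X k))"
    by (intro continuous_at_imp_continuous_on ballI continuous_intros isCont_real_char assms)
  obtain k0 where "\<forall>k\<in>{0..1}. norm (real_char N Y k0 * real_char M X k0) \<le> norm (real_char N Y k * real_char M X k)"
    using continuous_attains_inf[OF compact_Icc _ cont] by blast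
  moreover have "norm (real_char N Y k0 * real_char M X k0) > 0"
    using nz by simp
  ultimately show ?thesis
    using that by blast
qed

lemma real_char_ratio_defect_le:
  fixes s :: real
  assumes PM: "prob_space M" and PN: "prob_space N"
    and X: "X \<in> measurable M (count_space UNIV)" and Y: "Y \<in> measurable N (count_space UNIV)"
  defines "\<delta> \<equiv> (\<integral>\<omega>. norm (iexp (s * real_of_rat (X \<omega>)) - 1) \<partial>M) + (\<integral>\<omega>. norm (iexp (s * real_of_rat (Y \<omega>)) - 1) \<partial>N)"
  assumes lower: "\<mu> \<le> norm (real_char N Y k * real_char M X k)" and small: "4 * \<delta> < \<mu>"
  shows "norm (real_char_ratio N Y M X (k + s) / (real_char_ratio N Y M X k * real_char_ratio N Y M X s) - 1)
    \<le> 8 * \<delta> / \<mu>"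
proof -
  define dX where "dX = (\<integral>\<omega>. norm (iexp (s * real_of_rat (X \<omega>)) - 1) \<partial>M)"
  define dY where "dY = (\<integral>\<omega>. norm (iexp (s * real_of_rat (Y \<omega>)) - 1) \<partial>N)"
  have "dX \<ge> 0" "dY \<ge> 0"
    unfolding dX_def dY_def by (simp_all add: integral_nonneg)
  then have "dX \<le> \<delta>" "dY \<le> \<delta>"
    unfolding \<delta>_def dX_def dY_def by simp_all
  have "norm (real_char N Y (k + s) - real_char N Y k) \<le> dY" "norm (real_char N Y s - 1) \<le> dY"
    using prob_space.norm_real_char_shift_le[OF PN Y, of k s] prob_space.norm_real_char_shift_le[OF PN Y, of 0 s]
    unfolding dY_def real_char_zero[OF PN] by simp_all
  moreover have "norm (real_char M X (k + s) - real_char M X k) \<le> dX" "norm (real_char M X s - 1) \<le> dX"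
    using prob_space.norm_real_char_shift_le[OF PM X, of k s] prob_space.norm_real_char_shift_le[OF PM X, of 0 s]
    unfolding dX_def real_char_zero[OF PM] by simp_all
  ultimately have close: "norm (real_char N Y (k + s) - real_char N Y k) \<le> \<delta>" "norm (real_char N Y s - 1) \<le> \<delta>"
    "norm (real_char M X (k + s) - real_char M X k) \<le> \<delta>" "norm (real_char M X s - 1) \<le> \<delta>"
    using \<open>dX \<le> \<delta>\<close> \<open>dY \<le> \<delta>\<close> by (blast intro: order_trans)+
  show ?thesis
    unfolding real_char_ratio_def
    by (rule quotient_defect_estimate[OF norm_real_char_le_1[OF PM X] norm_real_char_le_1[OF PM X]
          norm_real_char_le_1[OF PN Y] norm_real_char_le_1[OF PN Y] lower close(1,3,4,2) small])
qed

lemma real_char_ratio_defect_uniform_limit: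
  assumes PM: "prob_space M" and PN: "prob_space N"
    and X: "X \<in> measurable M (count_space UNIV)" and Y: "Y \<in> measurable N (count_space UNIV)"
    and nz: "\<And>t. real_char M X t \<noteq> 0" "\<And>t. real_char N Y t \<noteq> 0"
  shows "uniform_limit {0..1}
    (\<lambda>m k. real_char_ratio N Y M X (k + 2 * pi * fact m) /
      (real_char_ratio N Y M X k * real_char_ratio N Y M X (2 * pi * fact m))) (\<lambda>_. 1) sequentially"
proof (rule uniform_limitI)
  fix e :: real assume "e > 0"
  obtain \<mu> where "\<mu> > 0" and lower: "\<And>k. k \<in> {0..1} \<Longrightarrow> \<mu> \<le> norm (real_char N Y k * real_char M X k)"
    using real_char_product_bounded_below[OF PM PN X Y nz] by blast
  define \<delta> where "\<delta> m = (\<integral>\<omega>. norm (iexp (2 * pi * fact m * real_of_rat (X \<omega>)) - 1) \<partial>M)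
    + (\<integral>\<omega>. norm (iexp (2 * pi * fact m * real_of_rat (Y \<omega>)) - 1) \<partial>N)" for m
  have "\<delta> \<longlonglongrightarrow> 0 + 0"
    unfolding \<delta>_def by (intro tendsto_add prob_space.tendsto_integral_iexp_fact_period PM PN X Y)
  then have "\<forall>\<^sub>F m in sequentially. \<delta> m < min (\<mu> / 4) (e * \<mu> / 8)"
    by (intro order_tendstoD(2)) (use \<open>\<mu> > 0\<close> \<open>e > 0\<close> in auto)
  then show "\<forall>\<^sub>F m in sequentially. \<forall>k\<in>{0..1}. dist (real_char_ratio N Y M X (k + 2 * pi * fact m) /
      (real_char_ratio N Y M X k * real_char_ratio N Y M X (2 * pi * fact m))) 1 < e"
  proof (rule eventually_mono, intro ballI)
    fix m and k :: real
    assume \<delta>_small: "\<delta> m < min (\<mu> / 4) (e * \<mu> / 8)" and "k \<in> {0..1}"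
    have "norm (real_char_ratio N Y M X (k + 2 * pi * fact m) /
        (real_char_ratio N Y M X k * real_char_ratio N Y M X (2 * pi * fact m)) - 1) \<le> 8 * \<delta> m / \<mu>"
      using \<delta>_small unfolding \<delta>_def
      by (intro real_char_ratio_defect_le PM PN X Y lower \<open>k \<in> {0..1}\<close>) simp
    also have "\<dots> < e"
      using \<delta>_small \<open>\<mu> > 0\<close> by (simp add: field_simps)
    finally show "dist (real_char_ratio N Y M X (k + 2 * pi * fact m) /
        (real_char_ratio N Y M X k * real_char_ratio N Y M X (2 * pi * fact m))) 1 < e"
      by (simp add: dist_norm)
  qed
qed

lemma (in prob_space) exists_atom:
  fixes X :: "'a \<Rightarrow> 'b::countable"
  assumes X: "X \<in> measurable M (count_space UNIV)"
  obtains \<omega> where "\<omega> \<in> space M" "emeasure M {\<omega>' \<in> space M. X \<omega>' = X \<omega>} \<noteq> 0"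
proof (rule ccontr)
  assume no_atom: "\<not> thesis"
  have "emeasure (distr M (count_space UNIV) X) {q} = 0" for q
  proof (cases "\<exists>\<omega>\<in>space M. X \<omega> = q")
    case True
    then obtain \<omega> where "\<omega> \<in> space M" "X \<omega> = q"
      by blast
    moreover have "emeasure M {\<omega>' \<in> space M. X \<omega>' = X \<omega>} = 0"
      using no_atom that \<open>\<omega> \<in> space M\<close> by blast
    ultimately show ?thesis
      by (subst emeasure_distr[OF X]) (auto simp: vimage_def Int_def conj_commute)
  next
    case False
    then have "X -` {q} \<inter> space M = {}"
      by auto
    then show ?thesis
      by (subst emeasure_distr[OF X]) auto
  qed
  then have "emeasure (distr M (count_space UNIV) X) UNIV = 0"
    by (subst emeasure_countable_singleton) auto
  moreover have "emeasure (distr M (count_space UNIV) X) UNIV = 1"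
    by (subst emeasure_distr[OF X]) (auto simp: emeasure_space_1)
  ultimately show False
    by simp
qed

lemma emeasure_distr_count_space_eq_real:
  assumes X: "X \<in> measurable M (count_space UNIV)"
  shows "emeasure (distr M (count_space UNIV) X) A
    = emeasure (distr M borel (\<lambda>\<omega>. real_of_rat (X \<omega>))) (real_of_rat ` A)"
proof -
  have "real_of_rat ` A \<in> sets borel"
    by (rule sets.countable) (auto intro: countable_image)
  moreover have "X -` A \<inter> space M = (\<lambda>\<omega>. real_of_rat (X \<omega>)) -` (real_of_rat ` A) \<inter> space M"
    by (auto simp: image_iff)
  ultimately show ?thesis
    by (simp add: emeasure_distr X borel_measurable_count_space_comp)
qed

lemma distr_count_space_eq_if_real_distr_eq:
  assumes "X \<in> measurable M (count_space UNIV)" "Y \<in> measurable N (count_space UNIV)"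
    and "distr M borel (\<lambda>\<omega>. real_of_rat (X \<omega>)) = distr N borel (\<lambda>\<omega>. real_of_rat (Y \<omega>))"
  shows "distr M (count_space UNIV) X = distr N (count_space UNIV) Y"
  by (rule measure_eqI) (simp_all add: emeasure_distr_count_space_eq_real assms)

lemma real_distr_shift_rational:
  assumes PM: "prob_space M"
    and X: "X \<in> measurable M (count_space UNIV)" and Y: "Y \<in> measurable N (count_space UNIV)"
    and eq: "distr N borel (\<lambda>\<omega>. real_of_rat (Y \<omega>)) = distr M borel (\<lambda>\<omega>. real_of_rat (X \<omega>) + \<alpha>)"
  obtains \<beta> where "\<alpha> = real_of_rat \<beta>"
proof -
  obtain \<omega>0 where atom: "emeasure M {\<omega> \<in> space M. X \<omega> = X \<omega>0} \<noteq> 0"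
    using prob_space.exists_atom[OF PM X] by blast
  define x where "x = real_of_rat (X \<omega>0) + \<alpha>"
  have "emeasure (distr M borel (\<lambda>\<omega>. real_of_rat (X \<omega>) + \<alpha>)) {x} = emeasure M {\<omega> \<in> space M. X \<omega> = X \<omega>0}"
    by (subst emeasure_distr)
      (auto simp: x_def vimage_def Int_def conj_commute intro: borel_measurable_count_space_comp[OF X])
  with atom have "emeasure N ((\<lambda>\<omega>. real_of_rat (Y \<omega>)) -` {x} \<inter> space N) \<noteq> 0"
    unfolding eq[symmetric] by (subst (asm) emeasure_distr) (auto intro: borel_measurable_count_space_comp[OF Y])
  then have "(\<lambda>\<omega>. real_of_rat (Y \<omega>)) -` {x} \<inter> space N \<noteq> {}"
    by (metis emeasure_empty)
  then obtain \<omega>1 where "real_of_rat (Y \<omega>1) = x"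
    by blast
  then have "\<alpha> = real_of_rat (Y \<omega>1 - X \<omega>0)"
    unfolding x_def by (simp add: of_rat_diff)
  then show ?thesis
    by (rule that)
qed

lemma distr_shift_if_real_char_shift:
  assumes PM: "prob_space M" and PN: "prob_space N"
    and X: "X \<in> measurable M (count_space UNIV)" and Y: "Y \<in> measurable N (count_space UNIV)"
    and shift: "\<And>t. real_char N Y t = iexp (\<alpha> * t) * real_char M X t"
  shows "\<exists>\<beta>. distr N (count_space UNIV) Y = distr M (count_space UNIV) (\<lambda>\<omega>. X \<omega> + \<beta>)"
proof -
  let ?RX = "\<lambda>\<omega>. real_of_rat (X \<omega>) + \<alpha>"
  have RX: "?RX \<in> borel_measurable M"
    by (rule borel_measurable_count_space_comp[OF X])
  have "char (distr M borel ?RX) t = real_char N Y t" for t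
  proof -
    have "char (distr M borel ?RX) t = (\<integral>\<omega>. iexp (\<alpha> * t) * iexp (t * real_of_rat (X \<omega>)) \<partial>M)"
      unfolding char_def by (subst integral_distr[OF RX]) (simp_all add: algebra_simps flip: exp_add)
    also have "\<dots> = iexp (\<alpha> * t) * real_char M X t"
      unfolding real_char_def by simp
    finally show ?thesis
      by (simp add: shift)
  qed
  then have "distr N borel (\<lambda>\<omega>. real_of_rat (Y \<omega>)) = distr M borel ?RX"
    by (intro Levy_uniqueness real_distribution_real_of_rat PN Y prob_space.real_distribution_distr[OF PM RX])
      (simp add: real_char_eq_char[OF Y, symmetric] fun_eq_iff)
  moreover obtain \<beta> where "\<alpha> = real_of_rat \<beta>"
    using real_distr_shift_rational[OF PM X Y calculation] .
  ultimately have real_eq: "distr N borel (\<lambda>\<omega>. real_of_rat (Y \<omega>)) = distr M borel (\<lambda>\<omega>. real_of_rat (X \<omega> + \<beta>))"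
    by (simp add: of_rat_add)
  have "distr N (count_space UNIV) Y = distr M (count_space UNIV) (\<lambda>\<omega>. X \<omega> + \<beta>)"
    by (rule distr_count_space_eq_if_real_distr_eq[OF Y measurable_compose[OF X] real_eq]) simp
  then show ?thesis ..
qed

lemma filterlim_two_pi_fact: "filterlim (\<lambda>m. 2 * pi * fact m) at_top sequentially"
proof (rule filterlim_at_top_mono[OF filterlim_real_sequentially always_eventually], intro allI)
  fix m
  have "real m \<le> fact m"
    by (metis fact_ge_self of_nat_fact of_nat_le_iff)
  also have "\<dots> \<le> (2 * pi) * fact m"
    using pi_ge_two by (intro mult_le_cancel_right1[THEN iffD2]) auto
  finally show "real m \<le> 2 * pi * fact m" .
qed

lemma distr_shift_if_real_char_ratio_hom:
  assumes PM: "prob_space M" and PN: "prob_space N"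
    and X: "X \<in> measurable M (count_space UNIV)" and Y: "Y \<in> measurable N (count_space UNIV)"
    and nz: "\<And>t. real_char M X t \<noteq> 0"
    and hom: "\<And>k l. real_char_ratio N Y M X (k + l) = real_char_ratio N Y M X k * real_char_ratio N Y M X l"
  shows "\<exists>\<beta>. distr N (count_space UNIV) Y = distr M (count_space UNIV) (\<lambda>\<omega>. X \<omega> + \<beta>)"
proof -
  have "(\<lambda>m. real_char_ratio N Y M X (2 * pi * fact m)) \<longlonglongrightarrow> 1 / 1"
    unfolding real_char_ratio_def by (intro tendsto_divide prob_space.real_char_fact_period_tendsto PM PN X Y) simp
  then have lim: "(\<lambda>m. real_char_ratio N Y M X (2 * pi * fact m)) \<longlonglongrightarrow> 1"
    by simp
  have "real_char_ratio N Y M X 0 \<noteq> 0"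
    unfolding real_char_ratio_def by (simp add: real_char_zero PM PN)
  from continuous_mult_hom_unimodular[OF continuous_real_char_ratio[OF PM PN X Y nz] hom this lim filterlim_two_pi_fact]
  obtain \<alpha> where "\<And>t. real_char_ratio N Y M X t = iexp (\<alpha> * t)"
    by blast
  then have "real_char N Y t = iexp (\<alpha> * t) * real_char M X t" for t
    using nz[of t] unfolding real_char_ratio_def by (simp add: divide_eq_eq)
  then show ?thesis
    by (rule distr_shift_if_real_char_shift[OF PM PN X Y])
qed

lemma real_char_ratio_hom_if_third_difference:
  assumes PM: "prob_space M" and PN: "prob_space N"
    and X: "X \<in> measurable M (count_space UNIV)" and Y: "Y \<in> measurable N (count_space UNIV)"
    and nz: "\<And>t. real_char M X t \<noteq> 0" "\<And>t. real_char N Y t \<noteq> 0"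
    and third: "\<And>k l m. real_char_ratio N Y M X (k + l + m) * real_char_ratio N Y M X k
        * real_char_ratio N Y M X l * real_char_ratio N Y M X m
      = real_char_ratio N Y M X (k + l) * real_char_ratio N Y M X (k + m)
        * real_char_ratio N Y M X (l + m) * real_char_ratio N Y M X 0"
  shows "real_char_ratio N Y M X (k + l) = real_char_ratio N Y M X k * real_char_ratio N Y M X l"
proof (rule mult_hom_if_third_difference[OF continuous_real_char_ratio[OF PM PN X Y nz(1)] _ _ third])
  show "real_char_ratio N Y M X x \<noteq> 0" for x
    unfolding real_char_ratio_def using nz by simp
  show "real_char_ratio N Y M X 0 = 1"
    unfolding real_char_ratio_def by (simp add: real_char_zero PM PN)
qed (rule real_char_ratio_defect_uniform_limit[OF PM PN X Y nz])

section \<open>Independent random variables and the two linear forms\<close>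

lemma admissible4_prob_space: "admissible4 M X \<Longrightarrow> prob_space M"
  unfolding admissible4_def by simp

lemma admissible4_measurable:
  assumes "admissible4 M X" "j \<in> {1..4}"
  shows "X j \<in> measurable M (count_space UNIV)"
proof -
  interpret prob_space M
    using assms(1) by (rule admissible4_prob_space)
  show ?thesis
    using assms unfolding admissible4_def indep_vars_def by auto
qed

lemma admissible4_real_char_nonzero:
  assumes "admissible4 M X" "j \<in> {1..4}"
  shows "real_char M (X j) t \<noteq> 0"
  using assms real_char_nonzero unfolding admissible4_def by blast

lemma admissible4_real_char_ratio:
  assumes "admissible4 M X" "admissible4 N Y" "j \<in> {1..4}"
  shows "continuous_on UNIV (real_char_ratio N (Y j) M (X j))" and "real_char_ratio N (Y j) M (X j) 0 = 1"
proof -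
  note M = admissible4_prob_space[OF assms(1)] admissible4_measurable[OF assms(1,3)]
    admissible4_real_char_nonzero[OF assms(1,3)]
  note N = admissible4_prob_space[OF assms(2)] admissible4_measurable[OF assms(2,3)]
    admissible4_real_char_nonzero[OF assms(2,3)]
  show "continuous_on UNIV (real_char_ratio N (Y j) M (X j))"
    by (rule continuous_real_char_ratio[OF M(1) N(1) M(2) N(2) M(3)])
  show "real_char_ratio N (Y j) M (X j) 0 = 1"
    unfolding real_char_ratio_def by (simp add: real_char_zero M(1) N(1))
qed

lemma admissible4_shifts_if_real_char_ratio_homs:
  assumes "admissible4 M X" "admissible4 N Y"
    and hom: "\<And>j k l. j \<in> {1..4} \<Longrightarrow>
      real_char_ratio N (Y j) M (X j) (k + l) = real_char_ratio N (Y j) M (X j) k * real_char_ratio N (Y j) M (X j) l"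
  shows "\<exists>\<alpha> :: nat \<Rightarrow> rat. \<forall>j\<in>{1..4}.
    distr N (count_space UNIV) (Y j) = distr M (count_space UNIV) (\<lambda>\<omega>. X j \<omega> + \<alpha> j)"
proof -
  have "\<exists>\<beta>. distr N (count_space UNIV) (Y j) = distr M (count_space UNIV) (\<lambda>\<omega>. X j \<omega> + \<beta>)"
    if "j \<in> {1..4}" for j
    by (rule distr_shift_if_real_char_ratio_hom[OF admissible4_prob_space[OF assms(1)]
          admissible4_prob_space[OF assms(2)] admissible4_measurable[OF assms(1) that]
          admissible4_measurable[OF assms(2) that] admissible4_real_char_nonzero[OF assms(1) that] hom[OF that]])
  then show ?thesis
    by (intro bchoice ballI)
qed

lemma admissible4_real_char_ratio_hom_if_third_difference:
  assumes "admissible4 M X" "admissible4 N Y" "j \<in> {1..4}"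
    and "\<And>k l m. real_char_ratio N (Y j) M (X j) (k + l + m) * real_char_ratio N (Y j) M (X j) k
        * real_char_ratio N (Y j) M (X j) l * real_char_ratio N (Y j) M (X j) m
      = real_char_ratio N (Y j) M (X j) (k + l) * real_char_ratio N (Y j) M (X j) (k + m)
        * real_char_ratio N (Y j) M (X j) (l + m) * real_char_ratio N (Y j) M (X j) 0"
  shows "real_char_ratio N (Y j) M (X j) (k + l) = real_char_ratio N (Y j) M (X j) k * real_char_ratio N (Y j) M (X j) l"
proof -
  note M = admissible4_prob_space[OF assms(1)] admissible4_measurable[OF assms(1,3)]
    admissible4_real_char_nonzero[OF assms(1,3)]
  note N = admissible4_prob_space[OF assms(2)] admissible4_measurable[OF assms(2,3)]
    admissible4_real_char_nonzero[OF assms(2,3)]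
  show ?thesis
    by (rule real_char_ratio_hom_if_third_difference[OF M(1) N(1) M(2) N(2) M(3) N(3) assms(4)])
qed

lemma (in prob_space) real_char_indep_sum:
  assumes indep: "indep_vars (\<lambda>_. count_space UNIV) X I" and "finite I"
  shows "(\<integral>\<omega>. iexp (\<Sum>i\<in>I. c i * real_of_rat (X i \<omega>)) \<partial>M) = (\<Prod>i\<in>I. real_char M (X i) (c i))"
proof -
  have X: "X i \<in> measurable M (count_space UNIV)" if "i \<in> I" for i
    using indep that unfolding indep_vars_def by auto
  have "indep_vars (\<lambda>_. borel) (\<lambda>i \<omega>. iexp (c i * real_of_rat (X i \<omega>))) I"
    by (rule indep_vars_compose2[OF indep]) simp
  then have "(\<integral>\<omega>. (\<Prod>i\<in>I. iexp (c i * real_of_rat (X i \<omega>))) \<partial>M) = (\<Prod>i\<in>I. real_char M (X i) (c i))"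
    unfolding real_char_def
    by (intro indep_vars_lebesgue_integral \<open>finite I\<close> integrable_bounded_count_space_comp[OF X, where B = 1])
      simp_all
  moreover have "iexp (\<Sum>i\<in>I. c i * real_of_rat (X i \<omega>)) = (\<Prod>i\<in>I. iexp (c i * real_of_rat (X i \<omega>)))" for \<omega>
    using \<open>finite I\<close> by (simp add: sum_distrib_left flip: exp_sum)
  ultimately show ?thesis
    by simp
qed

lemma measurable_count_space_comp2:
  fixes X :: "'a \<Rightarrow> 'c::countable" and Y :: "'a \<Rightarrow> 'd::countable"
  assumes "X \<in> measurable M (count_space UNIV)" "Y \<in> measurable M (count_space UNIV)"
  shows "(\<lambda>\<omega>. F (X \<omega>) (Y \<omega>)) \<in> measurable M (count_space UNIV)"
proof (rule measurable_compose_countable[OF _ assms(1)])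
  show "(\<lambda>\<omega>. F x (Y \<omega>)) \<in> measurable M (count_space UNIV)" for x
    by (rule measurable_compose[OF assms(2)]) simp
qed

lemma measurable_linear_forms:
  fixes X :: "nat \<Rightarrow> 'a \<Rightarrow> rat" and a2 a3 b2 b3 :: rat
  assumes X: "\<And>j. j \<in> {1..4} \<Longrightarrow> X j \<in> measurable M (count_space UNIV)"
  shows "(\<lambda>\<omega>. (X 1 \<omega> + a2 * X 2 \<omega> + a3 * X 3 \<omega>, b2 * X 2 \<omega> + b3 * X 3 \<omega> + X 4 \<omega>)) \<in> measurable M (count_space UNIV)"
proof -
  have "(\<lambda>\<omega>. X 1 \<omega> + a2 * X 2 \<omega>) \<in> measurable M (count_space UNIV)"
    by (rule measurable_count_space_comp2[where F = "\<lambda>u v. u + a2 * v"]) (simp_all add: X)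
  then have L1: "(\<lambda>\<omega>. X 1 \<omega> + a2 * X 2 \<omega> + a3 * X 3 \<omega>) \<in> measurable M (count_space UNIV)"
    by (rule measurable_count_space_comp2[where F = "\<lambda>u v. u + a3 * v"]) (simp add: X)
  have "(\<lambda>\<omega>. b2 * X 2 \<omega> + b3 * X 3 \<omega>) \<in> measurable M (count_space UNIV)"
    by (rule measurable_count_space_comp2[where F = "\<lambda>u v. b2 * u + b3 * v"]) (simp_all add: X)
  then have L2: "(\<lambda>\<omega>. b2 * X 2 \<omega> + b3 * X 3 \<omega> + X 4 \<omega>) \<in> measurable M (count_space UNIV)"
    by (rule measurable_count_space_comp2[where F = "(+)"]) (simp add: X)
  show ?thesis
    by (rule measurable_count_space_comp2[where F = Pair, OF L1 L2])
qed

lemma real_char_ratio_equation: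
  fixes a2 a3 b2 b3 :: rat
  assumes xi: "admissible4 M \<xi>" and eta: "admissible4 N \<eta>"
    and joint: "distr N (count_space UNIV)
                   (\<lambda>\<omega>. (\<eta> 1 \<omega> + a2 * \<eta> 2 \<omega> + a3 * \<eta> 3 \<omega>, b2 * \<eta> 2 \<omega> + b3 * \<eta> 3 \<omega> + \<eta> 4 \<omega>))
              = distr M (count_space UNIV)
                   (\<lambda>\<omega>. (\<xi> 1 \<omega> + a2 * \<xi> 2 \<omega> + a3 * \<xi> 3 \<omega>, b2 * \<xi> 2 \<omega> + b3 * \<xi> 3 \<omega> + \<xi> 4 \<omega>))"
  shows "real_char_ratio N (\<eta> 1) M (\<xi> 1) s
    * real_char_ratio N (\<eta> 2) M (\<xi> 2) (real_of_rat a2 * s + real_of_rat b2 * t)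
    * real_char_ratio N (\<eta> 3) M (\<xi> 3) (real_of_rat a3 * s + real_of_rat b3 * t)
    * real_char_ratio N (\<eta> 4) M (\<xi> 4) t = 1"
proof -
  define c where "c i = (if i = 1 then s else if i = 2 then real_of_rat a2 * s + real_of_rat b2 * t
    else if i = 3 then real_of_rat a3 * s + real_of_rat b3 * t else t)" for i :: nat
  define F where "F p = iexp (s * real_of_rat (fst p) + t * real_of_rat (snd p))" for p :: "rat \<times> rat"
  have I: "{1..4 :: nat} = {1, 2, 3, 4}"
    by auto
  have joint_char: "(\<integral>\<omega>. F (X 1 \<omega> + a2 * X 2 \<omega> + a3 * X 3 \<omega>, b2 * X 2 \<omega> + b3 * X 3 \<omega> + X 4 \<omega>) \<partial>P)
      = (\<Prod>i\<in>{1..4}. real_char P (X i) (c i))" if "admissible4 P X" for P :: "'c measure" and X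
  proof -
    have pointwise: "F (X 1 \<omega> + a2 * X 2 \<omega> + a3 * X 3 \<omega>, b2 * X 2 \<omega> + b3 * X 3 \<omega> + X 4 \<omega>)
        = iexp (\<Sum>i\<in>{1..4}. c i * real_of_rat (X i \<omega>))" for \<omega>
      unfolding F_def c_def I by (simp add: of_rat_add of_rat_mult algebra_simps)
    have "prob_space.indep_vars P (\<lambda>_. count_space UNIV) X {1..4}"
      using that unfolding admissible4_def by simp
    then show ?thesis
      unfolding pointwise by (rule prob_space.real_char_indep_sum[OF admissible4_prob_space[OF that]]) simp
  qed
  have "(\<integral>\<omega>. F (\<eta> 1 \<omega> + a2 * \<eta> 2 \<omega> + a3 * \<eta> 3 \<omega>, b2 * \<eta> 2 \<omega> + b3 * \<eta> 3 \<omega> + \<eta> 4 \<omega>) \<partial>N)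
      = (\<integral>z. F z \<partial>distr N (count_space UNIV)
          (\<lambda>\<omega>. (\<eta> 1 \<omega> + a2 * \<eta> 2 \<omega> + a3 * \<eta> 3 \<omega>, b2 * \<eta> 2 \<omega> + b3 * \<eta> 3 \<omega> + \<eta> 4 \<omega>)))"
    by (subst integral_distr[OF measurable_linear_forms[OF admissible4_measurable[OF eta]]]) auto
  also have "\<dots> = (\<integral>\<omega>. F (\<xi> 1 \<omega> + a2 * \<xi> 2 \<omega> + a3 * \<xi> 3 \<omega>, b2 * \<xi> 2 \<omega> + b3 * \<xi> 3 \<omega> + \<xi> 4 \<omega>) \<partial>M)"
    unfolding joint by (subst integral_distr[OF measurable_linear_forms[OF admissible4_measurable[OF xi]]]) auto
  finally have "(\<Prod>i\<in>{1..4}. real_char N (\<eta> i) (c i)) = (\<Prod>i\<in>{1..4}. real_char M (\<xi> i) (c i))"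
    unfolding joint_char[OF xi] joint_char[OF eta] .
  then have "(\<Prod>i\<in>{1..4}. real_char N (\<eta> i) (c i)) / (\<Prod>i\<in>{1..4}. real_char M (\<xi> i) (c i)) = 1"
    using admissible4_real_char_nonzero[OF xi] by simp
  then show ?thesis
    unfolding real_char_ratio_def prod_dividef[symmetric] I by (simp add: c_def mult.assoc)
qed

lemma third_differences_if_independent_forms:
  fixes h :: "nat \<Rightarrow> real \<Rightarrow> complex" and a2 a3 b2 b3 :: real
  assumes eq: "\<And>x y. h 1 x * h 2 (a2 * x + b2 * y) * h 3 (a3 * x + b3 * y) * h 4 y = 1"
    and nz: "a2 \<noteq> 0" "a3 \<noteq> 0" "b2 \<noteq> 0" "b3 \<noteq> 0" and det: "a2 * b3 \<noteq> a3 * b2"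
    and "j \<in> {1..4}"
  shows "h j (k + l + m) * h j k * h j l * h j m = h j (k + l) * h j (k + m) * h j (l + m) * h j 0"
proof -
  have "j = 1 \<or> j = 2 \<or> j = 3 \<or> j = 4"
    using \<open>j \<in> {1..4}\<close> by auto
  then show ?thesis
  proof (elim disjE)
    assume "j = 1"
    show ?thesis
      unfolding \<open>j = 1\<close>
      by (rule third_difference_if_linear_forms[where pF = 1 and qF = 0 and G = "h 2" and pG = a2 and qG = b2
            and H = "h 3" and pH = a3 and qH = b3 and K = "h 4" and pK = 0 and qK = 1])
        (use eq nz in simp_all)
  next
    assume "j = 2"
    show ?thesis
      unfolding \<open>j = 2\<close>
      by (rule third_difference_if_linear_forms[where pF = a2 and qF = b2 and G = "h 1" and pG = 1 and qG = 0
            and H = "h 3" and pH = a3 and qH = b3 and K = "h 4" and pK = 0 and qK = 1])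
        (use eq nz det in \<open>simp_all add: mult_ac\<close>)
  next
    assume "j = 3"
    show ?thesis
      unfolding \<open>j = 3\<close>
      by (rule third_difference_if_linear_forms[where pF = a3 and qF = b3 and G = "h 1" and pG = 1 and qG = 0
            and H = "h 2" and pH = a2 and qH = b2 and K = "h 4" and pK = 0 and qK = 1])
        (use eq nz det in \<open>simp_all add: mult_ac\<close>)
  next
    assume "j = 4"
    show ?thesis
      unfolding \<open>j = 4\<close>
      by (rule third_difference_if_linear_forms[where pF = 0 and qF = 1 and G = "h 1" and pG = 1 and qG = 0
            and H = "h 2" and pH = a2 and qH = b2 and K = "h 3" and pK = a3 and qK = b3])
        (use eq nz in \<open>simp_all add: mult_ac\<close>)
  qed
qed

lemma mult_homs_if_proportional_forms:
  fixes h :: "nat \<Rightarrow> real \<Rightarrow> complex" and a2 a3 b2 b3 :: real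
  assumes eq: "\<And>x y. h 1 x * h 2 (a2 * x + b2 * y) * h 3 (a3 * x + b3 * y) * h 4 y = 1"
    and "h 3 = h 2" and nz: "a2 \<noteq> 0" "b2 \<noteq> 0" and proportional: "a2 * b3 = a3 * b2"
    and ratio: "\<bar>a2\<bar> \<noteq> \<bar>a3\<bar> \<or> a2 = a3"
    and cont: "continuous_on UNIV (h 2)" and h_0: "\<And>j. j \<in> {1..4} \<Longrightarrow> h j 0 = 1"
    and "j \<in> {1..4}"
  shows "h j (k + l) = h j k * h j l"
proof -
  define r where "r = a3 / a2"
  define H where "H t = h 2 t * h 2 (r * t)" for t
  have lin: "a3 * x + b3 * y = r * (a2 * x + b2 * y)" for x y
    using proportional nz unfolding r_def by (simp add: field_simps)
  have eq': "h 1 (1 * x + 0 * y) * H (a2 * x + b2 * y) * h 4 (0 * x + 1 * y) = 1" for x y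
    using eq[of x y] \<open>h 3 = h 2\<close> unfolding H_def lin[symmetric] by (simp add: mult_ac)
  have hom_1: "h 1 (k + l) = h 1 k * h 1 l" for k l
    using second_difference_if_linear_forms[of "h 1" 1 0 H a2 b2 "h 4" 0 1 k l] eq' nz h_0[of 1] by simp
  have hom_4: "h 4 (k + l) = h 4 k * h 4 l" for k l
    using second_difference_if_linear_forms[of "h 4" 0 1 "h 1" 1 0 H a2 b2 k l] eq' nz h_0[of 4]
    by (simp add: mult_ac)
  have "h 2 0 = 1"
    using h_0 by simp
  have "H (k + l) * H 0 = H k * H l" for k l
    using second_difference_if_linear_forms[of H a2 b2 "h 1" 1 0 "h 4" 0 1 k l] eq' nz
    by (simp add: mult_ac)
  moreover have "H 0 = 1"
    unfolding H_def using \<open>h 2 0 = 1\<close> by simp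
  ultimately have H_hom: "H (k + l) = H k * H l" for k l
    by simp
  have "\<bar>r\<bar> \<noteq> 1 \<or> r = 1"
    using ratio nz unfolding r_def by (auto simp: abs_divide)
  then have hom_2: "h 2 (k + l) = h 2 k * h 2 l" for k l
    by (rule mult_hom_if_dilation_product_hom[OF cont \<open>h 2 0 = 1\<close> H_hom[unfolded H_def]])
  show ?thesis
    using \<open>j \<in> {1..4}\<close> hom_1 hom_2 hom_4 \<open>h 3 = h 2\<close> by (auto simp: atLeastAtMost_iff le_Suc_eq numeral_eq_Suc)
qed

lemma shifts_if_independent_forms:
  fixes a2 a3 b2 b3 :: real
  assumes xi: "admissible4 M \<xi>" and eta: "admissible4 N \<eta>"
    and eq: "\<And>x y. real_char_ratio N (\<eta> 1) M (\<xi> 1) x * real_char_ratio N (\<eta> 2) M (\<xi> 2) (a2 * x + b2 * y)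
      * real_char_ratio N (\<eta> 3) M (\<xi> 3) (a3 * x + b3 * y) * real_char_ratio N (\<eta> 4) M (\<xi> 4) y = 1"
    and nz: "a2 \<noteq> 0" "a3 \<noteq> 0" "b2 \<noteq> 0" "b3 \<noteq> 0" and det: "a2 * b3 \<noteq> a3 * b2"
  shows "\<exists>\<alpha> :: nat \<Rightarrow> rat. \<forall>j\<in>{1..4}.
    distr N (count_space UNIV) (\<eta> j) = distr M (count_space UNIV) (\<lambda>\<omega>. \<xi> j \<omega> + \<alpha> j)"
proof (rule admissible4_shifts_if_real_char_ratio_homs[OF xi eta])
  fix j :: nat and k l :: real
  assume "j \<in> {1..4}"
  note third = third_differences_if_independent_forms[where h = "\<lambda>j. real_char_ratio N (\<eta> j) M (\<xi> j)",
      OF eq nz det \<open>j \<in> {1..4}\<close>]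
  show "real_char_ratio N (\<eta> j) M (\<xi> j) (k + l)
      = real_char_ratio N (\<eta> j) M (\<xi> j) k * real_char_ratio N (\<eta> j) M (\<xi> j) l"
    by (rule admissible4_real_char_ratio_hom_if_third_difference[OF xi eta \<open>j \<in> {1..4}\<close> third])
qed

lemma shifts_if_proportional_forms:
  fixes a2 a3 b2 b3 :: real
  assumes xi: "admissible4 M \<xi>" and eta: "admissible4 N \<eta>"
    and eq: "\<And>x y. real_char_ratio N (\<eta> 1) M (\<xi> 1) x * real_char_ratio N (\<eta> 2) M (\<xi> 2) (a2 * x + b2 * y)
      * real_char_ratio N (\<eta> 3) M (\<xi> 3) (a3 * x + b3 * y) * real_char_ratio N (\<eta> 4) M (\<xi> 4) y = 1"
    and nz: "a2 \<noteq> 0" "b2 \<noteq> 0" and proportional: "a2 * b3 = a3 * b2" and ratio: "\<bar>a2\<bar> \<noteq> \<bar>a3\<bar> \<or> a2 = a3"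
    and same_\<xi>: "distr M (count_space UNIV) (\<xi> 2) = distr M (count_space UNIV) (\<xi> 3)"
    and same_\<eta>: "distr N (count_space UNIV) (\<eta> 2) = distr N (count_space UNIV) (\<eta> 3)"
  shows "\<exists>\<alpha> :: nat \<Rightarrow> rat. \<forall>j\<in>{1..4}.
    distr N (count_space UNIV) (\<eta> j) = distr M (count_space UNIV) (\<lambda>\<omega>. \<xi> j \<omega> + \<alpha> j)"
proof (rule admissible4_shifts_if_real_char_ratio_homs[OF xi eta])
  have ratio_3: "real_char_ratio N (\<eta> 3) M (\<xi> 3) = real_char_ratio N (\<eta> 2) M (\<xi> 2)"
    unfolding real_char_ratio_def
    using real_char_eq_if_distr_eq[OF admissible4_measurable[OF xi] admissible4_measurable[OF xi] same_\<xi>]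
      real_char_eq_if_distr_eq[OF admissible4_measurable[OF eta] admissible4_measurable[OF eta] same_\<eta>]
    by simp
  have cont: "continuous_on UNIV (real_char_ratio N (\<eta> 2) M (\<xi> 2))"
    by (rule admissible4_real_char_ratio(1)[OF xi eta]) simp
  fix j :: nat and k l :: real
  assume "j \<in> {1..4}"
  show "real_char_ratio N (\<eta> j) M (\<xi> j) (k + l)
      = real_char_ratio N (\<eta> j) M (\<xi> j) k * real_char_ratio N (\<eta> j) M (\<xi> j) l"
    by (rule mult_homs_if_proportional_forms[where h = "\<lambda>j. real_char_ratio N (\<eta> j) M (\<xi> j)",
          OF eq ratio_3 nz proportional ratio cont admissible4_real_char_ratio(2)[OF xi eta]])
      (use \<open>j \<in> {1..4}\<close> in auto)
qed

theorem theorem4p3: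
  fixes M :: "'a measure" and N :: "'b measure"
    and \<xi> :: "nat \<Rightarrow> 'a \<Rightarrow> rat" and \<eta> :: "nat \<Rightarrow> 'b \<Rightarrow> rat"
    and a2 a3 b2 b3 :: rat
  assumes nz: "a2 \<noteq> 0" "a3 \<noteq> 0" "b2 \<noteq> 0" "b3 \<noteq> 0"
    and xi: "admissible4 M \<xi>"
    and eta: "admissible4 N \<eta>"
    and joint: "distr N (count_space UNIV)
                   (\<lambda>\<omega>. (\<eta> 1 \<omega> + a2 * \<eta> 2 \<omega> + a3 * \<eta> 3 \<omega>, b2 * \<eta> 2 \<omega> + b3 * \<eta> 3 \<omega> + \<eta> 4 \<omega>))
              = distr M (count_space UNIV)
                   (\<lambda>\<omega>. (\<xi> 1 \<omega> + a2 * \<xi> 2 \<omega> + a3 * \<xi> 3 \<omega>, b2 * \<xi> 2 \<omega> + b3 * \<xi> 3 \<omega> + \<xi> 4 \<omega>))"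
  shows "(a2 * b3 \<noteq> a3 * b2 \<longrightarrow>
            (\<exists>\<alpha> :: nat \<Rightarrow> rat. \<forall>j\<in>{1..4}.
               distr N (count_space UNIV) (\<eta> j) = distr M (count_space UNIV) (\<lambda>\<omega>. \<xi> j \<omega> + \<alpha> j)))
       \<and> ((a2 * b3 = a3 * b2 \<and>
            distr M (count_space UNIV) (\<xi> 2) = distr M (count_space UNIV) (\<xi> 3) \<and>
            (\<bar>a2\<bar> \<noteq> \<bar>a3\<bar> \<or> a2 = a3) \<and>
            distr N (count_space UNIV) (\<eta> 2) = distr N (count_space UNIV) (\<eta> 3)) \<longrightarrow>
            (\<exists>\<alpha> :: nat \<Rightarrow> rat. \<forall>j\<in>{1..4}.
               distr N (count_space UNIV) (\<eta> j) = distr M (count_space UNIV) (\<lambda>\<omega>. \<xi> j \<omega> + \<alpha> j)))"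
proof -
  note eq = real_char_ratio_equation[OF xi eta joint]
  have nz': "real_of_rat a2 \<noteq> 0" "real_of_rat a3 \<noteq> 0" "real_of_rat b2 \<noteq> 0" "real_of_rat b3 \<noteq> 0"
    using nz by simp_all
  show ?thesis
    using shifts_if_independent_forms[OF xi eta eq nz'] shifts_if_proportional_forms[OF xi eta eq nz'(1,3)]
    by (simp flip: of_rat_mult)
qed

end
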